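(* Let $\mathfrak{H}$ be a complete Heyting algebra and $\mathsf{i}\in\mathfrak{H}$. Then $$\bigwedge_{\mathsf{j}\in\mathfrak{H}}(\mathsf{j}\vee(\mathsf{j}\to\mathsf{i})) = \bigwedge\{\mathsf{h}\in\mathfrak{H}\mid \mathsf{h}\ge\mathsf{i}\text{ and }\mathsf{h}\text{ is }\mathsf{i}\text{-dense}\}.$$
   Context: For elements $\mathsf{h}\ge\mathsf{i}$ of a Heyting algebra, $\mathsf{h}$ is called $\mathsf{i}$-dense if for every $\mathsf{j}$ in the algebra, $\mathsf{h}\wedge\mathsf{j}=\mathsf{i}$ implies $\mathsf{j}=\mathsf{i}$. *)

theory Defs
  imports Main
begin

definition heyting_imp :: "('a::complete_lattice \<Rightarrow> 'a \<Rightarrow> 'a) \<Rightarrow> bool" where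
  "heyting_imp imp \<longleftrightarrow> (\<forall>a b c. inf a b \<le> c \<longleftrightarrow> a \<le> imp b c)"

definition dense_above :: "'a::complete_lattice \<Rightarrow> 'a \<Rightarrow> bool" where
  "dense_above i h \<longleftrightarrow> (\<forall>j. inf h j = i \<longrightarrow> j = i)"

end

theory Submission
  imports Defs
begin

text \<open>Each j \<squnion> (j \<rightarrow> i) is itself an i-dense element above i, so the left-hand
infimum is over a subfamily of the right-hand set. Conversely, an i-dense h satisfies
h \<rightarrow> i = i, because h \<sqinter> (h \<rightarrow> i) = i; hence h = h \<squnion> (h \<rightarrow> i) occurs in the left-hand family.\<close>

lemma heyting_imp_residuation:
  assumes "heyting_imp imp"
  shows "inf a b \<le> c \<longleftrightarrow> a \<le> imp b c"
  using assms unfolding heyting_imp_def by blast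

lemma heyting_imp_upper:
  assumes "heyting_imp imp"
  shows "c \<le> imp b c"
  using heyting_imp_residuation [OF assms, of c b c] by simp

lemma heyting_imp_modus_ponens:
  assumes "heyting_imp imp"
  shows "inf b (imp b c) \<le> c"
  using heyting_imp_residuation [OF assms, of "imp b c" b c] by (simp add: inf_commute)

lemma dense_above_imp_eq:
  assumes "heyting_imp imp" and "i \<le> h" and "dense_above i h"
  shows "imp h i = i"
proof -
  have "inf h (imp h i) = i"
    using heyting_imp_modus_ponens [OF assms(1)] heyting_imp_upper [OF assms(1)] assms(2)
    by (simp add: antisym)
  then show ?thesis
    using assms(3) unfolding dense_above_def by blast
qed

lemma dense_above_sup_imp:
  assumes "heyting_imp imp"
  shows "dense_above i (sup j (imp j i))"
  unfolding dense_above_def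
proof (intro allI impI)
  fix k
  assume k: "inf (sup j (imp j i)) k = i"
  have "inf j k \<le> i"
    using k inf_mono [of j "sup j (imp j i)" k k] by simp
  then have "k \<le> sup j (imp j i)"
    using heyting_imp_residuation [OF assms, of k j i] by (simp add: inf_commute le_supI2)
  then show "k = i"
    using k by (simp add: inf_absorb2)
qed

theorem corollary4p5:
  fixes imp :: "'a::complete_lattice \<Rightarrow> 'a \<Rightarrow> 'a" and i :: 'a
  assumes "heyting_imp imp"
  shows "(INF j. sup j (imp j i)) = Inf {h. i \<le> h \<and> dense_above i h}"
proof (rule antisym)
  show "(INF j. sup j (imp j i)) \<le> Inf {h. i \<le> h \<and> dense_above i h}"
  proof (rule Inf_greatest)
    fix h
    assume "h \<in> {h. i \<le> h \<and> dense_above i h}"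
    then have "imp h i = i" and "i \<le> h"
      using dense_above_imp_eq [OF assms] by auto
    then have "sup h (imp h i) = h"
      by (simp add: sup_absorb1)
    then show "(INF j. sup j (imp j i)) \<le> h"
      by (intro INF_lower2 [of h]) simp_all
  qed
  show "Inf {h. i \<le> h \<and> dense_above i h} \<le> (INF j. sup j (imp j i))"
  proof (rule INF_greatest, rule Inf_lower, intro CollectI conjI)
    fix j
    show "i \<le> sup j (imp j i)"
      using heyting_imp_upper [OF assms] by (rule le_supI2)
    show "dense_above i (sup j (imp j i))"
      using dense_above_sup_imp [OF assms] .
  qed
qed

end
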